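(* Let $0<\alpha<d$ and let $f,g:\mathbb{Z}^d\to\mathbb{R}$ satisfy $f(x)\sim A|x|^{-\alpha}$ as $|x|\to\infty$ for some $A>0$, $\sum_x|g(x)|=K$ and $|g(x)|\le K|x|^{-d}$ for all $x\neq0$, with $K>0$. Then $(f*g)(x)\sim A\big(\sum_yg(y)\big)|x|^{-\alpha}$ as $|x|\to\infty$.
   Context: $(f*g)(x)=\sum_yf(x-y)g(y)$; $a(x)\sim b(x)$ means $a(x)/b(x)\to1$ (for the conclusion, interpreted as $|x|^\alpha(f*g)(x)\to A\sum_yg(y)$). *)

theory Defs
  imports "HOL-Analysis.Analysis" "HOL-Library.Landau_Symbols"
begin

text \<open>Lattice points of Z^d are modelled as int ^ 'd (d = CARD('d)).
  The Euclidean norm |x| of a lattice point:\<close>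
definition lnorm :: "int ^ 'd::finite \<Rightarrow> real" where
  "lnorm x = norm (\<chi> i. real_of_int (x $ i))"

definition lconv :: "(int ^ 'd::finite \<Rightarrow> real) \<Rightarrow> (int ^ 'd \<Rightarrow> real) \<Rightarrow> int ^ 'd \<Rightarrow> real" where
  "lconv f g x = (\<Sum>\<^sub>\<infinity>y. f (x - y) * g y)"

definition at_infty_lat :: "(int ^ 'd::finite) filter" where
  "at_infty_lat = filtercomap lnorm at_top"

end

theory Submission
  imports Defs
begin

(* Since f ~ A |z|^(-alpha) and lattice balls are finite, |f(z)| <= B max(1,|z|)^(-alpha) for all z.
   Put R = |x| and S = sum_y g(y). Then R^alpha (f*g)(x) - A S = sum_y (R^alpha f(x-y) - A) g(y),
   and the sum is split according to the position of y at a scale delta R.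
   If |y| <= delta R, then |x-y|/R lies in [1-delta, 1+delta], so R^alpha f(x-y) is close to A.
   If |y| > delta R and |x-y| > delta R, then R^alpha |f(x-y)| <= B delta^(-alpha), and such y
   carry only a tail of the convergent series sum_y |g(y)|.
   If |x-y| <= delta R, then |y| >= R/2, so |g(y)| <= K 2^d R^(-d), whereas
   sum_{|z| <= delta R} max(1,|z|)^(-alpha) = O((delta R)^(d-alpha)) because alpha < d;
   this region contributes O(delta^(d-alpha)).
   Choosing delta small and then R large makes all three contributions small. *)

section \<open>Lattice balls\<close>

definition real_vec :: "int ^ 'd::finite \<Rightarrow> real ^ 'd" where
  "real_vec x = (\<chi> i. real_of_int (x $ i))"

lemma lnorm_eq_norm_real_vec: "lnorm x = norm (real_vec x)"
  by (simp add: lnorm_def real_vec_def)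

lemma real_vec_diff [simp]: "real_vec (x - y) = real_vec x - real_vec y"
  by (simp add: real_vec_def vec_eq_iff)

lemma lnorm_nonneg [simp]: "0 \<le> lnorm x"
  by (simp add: lnorm_eq_norm_real_vec)

lemma lnorm_zero [simp]: "lnorm (0 :: int ^ 'd::finite) = 0"
  by (simp add: lnorm_def vec_eq_iff zero_vec_def)

lemma abs_lnorm_diff_le: "\<bar>lnorm (x - y) - lnorm x\<bar> \<le> lnorm y"
  using norm_triangle_ineq3[of "real_vec x - real_vec y" "real_vec x"]
  by (simp add: lnorm_eq_norm_real_vec)

lemma abs_component_le_lnorm: "\<bar>real_of_int (x $ i)\<bar> \<le> lnorm x"
  using component_le_norm_cart[of "real_vec x" i]
  by (simp add: lnorm_eq_norm_real_vec real_vec_def)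

lemma lnorm_le_subset_box:
  "{z :: int ^ 'd::finite. lnorm z \<le> r} \<subseteq> vec_lambda ` (UNIV \<rightarrow>\<^sub>E {-\<lfloor>r\<rfloor>..\<lfloor>r\<rfloor>})"
proof
  fix z :: "int ^ 'd" assume "z \<in> {z. lnorm z \<le> r}"
  then have "\<bar>z $ i\<bar> \<le> \<lfloor>r\<rfloor>" for i
    using abs_component_le_lnorm[of z i] by (simp add: le_floor_iff)
  then have "vec_nth z \<in> UNIV \<rightarrow>\<^sub>E {-\<lfloor>r\<rfloor>..\<lfloor>r\<rfloor>}"
    by (auto simp: abs_le_iff minus_le_iff)
  then show "z \<in> vec_lambda ` (UNIV \<rightarrow>\<^sub>E {-\<lfloor>r\<rfloor>..\<lfloor>r\<rfloor>})"
    by (metis image_eqI vec_nth_inverse)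
qed

lemma finite_lnorm_le [simp]: "finite {z :: int ^ 'd::finite. lnorm z \<le> r}"
  by (rule finite_subset[OF lnorm_le_subset_box]) (simp add: finite_PiE)

lemma card_lnorm_le:
  assumes "0 \<le> r"
  shows "real (card {z :: int ^ 'd::finite. lnorm z \<le> r}) \<le> (2 * r + 1) ^ CARD('d)"
proof -
  have "card {z :: int ^ 'd. lnorm z \<le> r} \<le> card (UNIV \<rightarrow>\<^sub>E {-\<lfloor>r\<rfloor>..\<lfloor>r\<rfloor>} :: ('d \<Rightarrow> int) set)"
    by (rule order_trans[OF card_mono[OF _ lnorm_le_subset_box] card_image_le])
       (simp_all add: finite_PiE)
  also have "\<dots> = nat (2 * \<lfloor>r\<rfloor> + 1) ^ CARD('d)"
    by (simp add: card_PiE)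
  finally have "real (card {z :: int ^ 'd. lnorm z \<le> r}) \<le> real (nat (2 * \<lfloor>r\<rfloor> + 1)) ^ CARD('d)"
    by (metis of_nat_le_iff of_nat_power)
  also have "\<dots> \<le> (2 * r + 1) ^ CARD('d)"
    using assms by (intro power_mono) auto
  finally show ?thesis .
qed

section \<open>Weighted sums over lattice balls\<close>

definition lweight :: "real \<Rightarrow> int ^ 'd::finite \<Rightarrow> real" where
  "lweight \<alpha> z = max 1 (lnorm z) powr (-\<alpha>)"

lemma lweight_pos: "0 < lweight \<alpha> z"
  by (simp add: lweight_def)

lemma lweight_le_1: "0 \<le> \<alpha> \<Longrightarrow> lweight \<alpha> z \<le> 1"
  by (simp add: lweight_def powr_minus divide_simps ge_one_powr_ge_zero)

lemma lweight_eq: "1 \<le> lnorm z \<Longrightarrow> lweight \<alpha> z = lnorm z powr (-\<alpha>)"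
  by (simp add: lweight_def)

lemma lweight_le_powr:
  assumes "0 \<le> \<alpha>" "0 < r" "r \<le> lnorm z"
  shows "lweight \<alpha> z \<le> r powr (-\<alpha>)"
  unfolding lweight_def by (rule powr_mono2') (use assms in auto)

lemma sum_lweight_shell_le:
  fixes r \<alpha> :: real
  assumes "0 \<le> \<alpha>" "1 \<le> r"
  shows "(\<Sum>z \<in> {z :: int ^ 'd::finite. r/2 < lnorm z \<and> lnorm z \<le> r}. lweight \<alpha> z)
           \<le> 3 ^ CARD('d) * 2 powr \<alpha> * r powr (CARD('d) - \<alpha>)"
proof -
  let ?S = "{z :: int ^ 'd. r/2 < lnorm z \<and> lnorm z \<le> r}"
  have "real (card ?S) \<le> real (card {z :: int ^ 'd. lnorm z \<le> r})"
    by (intro of_nat_mono card_mono) auto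
  also have "\<dots> \<le> (2 * r + 1) ^ CARD('d)"
    using assms by (intro card_lnorm_le) simp
  also have "\<dots> \<le> (3 * r) ^ CARD('d)"
    using assms by (intro power_mono) auto
  finally have card: "real (card ?S) \<le> (3 * r) ^ CARD('d)" .
  have "(\<Sum>z\<in>?S. lweight \<alpha> z) \<le> (\<Sum>z\<in>?S. (r/2) powr (-\<alpha>))"
    by (rule sum_mono, rule lweight_le_powr) (use assms in auto)
  also have "\<dots> = real (card ?S) * (r/2) powr (-\<alpha>)"
    by simp
  also have "\<dots> \<le> (3 * r) ^ CARD('d) * (r/2) powr (-\<alpha>)"
    using card by (rule mult_right_mono) simp
  also have "\<dots> = 3 ^ CARD('d) * 2 powr \<alpha> * r powr (CARD('d) - \<alpha>)"
    using assms
    by (simp add: power_mult_distrib powr_realpow[symmetric] powr_diff powr_divide powr_minus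
        divide_simps)
  finally show ?thesis .
qed

lemma sum_lweight_le_card_bound:
  assumes "0 \<le> \<alpha>" "0 \<le> r"
  shows "(\<Sum>z \<in> {z :: int ^ 'd::finite. lnorm z \<le> r}. lweight \<alpha> z) \<le> (2 * r + 1) ^ CARD('d)"
proof -
  have "(\<Sum>z \<in> {z :: int ^ 'd. lnorm z \<le> r}. lweight \<alpha> z) \<le> (\<Sum>z \<in> {z :: int ^ 'd. lnorm z \<le> r}. 1)"
    by (intro sum_mono lweight_le_1 assms(1))
  also have "\<dots> \<le> (2 * r + 1) ^ CARD('d)"
    using card_lnorm_le[OF assms(2)] by simp
  finally show ?thesis .
qed

lemma sum_lweight_ball_le_dyadic:
  fixes \<alpha> C :: real
  assumes "0 \<le> \<alpha>" "\<alpha> < CARD('d::finite)"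
    and base: "5 ^ CARD('d) \<le> C"
    and step: "C * 2 powr (\<alpha> - CARD('d)) + 3 ^ CARD('d) * 2 powr \<alpha> \<le> C"
    and "1 \<le> r" "r \<le> 2 ^ n"
  shows "(\<Sum>z \<in> {z :: int ^ 'd. lnorm z \<le> r}. lweight \<alpha> z) \<le> C * r powr (CARD('d) - \<alpha>)"
  using assms(5,6)
proof (induction n arbitrary: r)
  let ?W = "\<lambda>r. \<Sum>z \<in> {z :: int ^ 'd. lnorm z \<le> r}. lweight \<alpha> z"
  have small: "?W r \<le> C * r powr (CARD('d) - \<alpha>)" if "1 \<le> r" "r \<le> 2" for r
  proof -
    have "?W r \<le> (2 * r + 1) ^ CARD('d)"
      using assms(1) that by (intro sum_lweight_le_card_bound) auto
    also have "\<dots> \<le> 5 ^ CARD('d)"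
      using that by (intro power_mono) auto
    also have "\<dots> \<le> C * 1"
      using base by simp
    also have "\<dots> \<le> C * r powr (CARD('d) - \<alpha>)"
      using base that assms(2)
      by (intro mult_left_mono ge_one_powr_ge_zero) (auto intro: order_trans[rotated])
    finally show ?thesis .
  qed
  {
    case 0
    then show ?case using small[of r] by simp
  next
    case (Suc n)
    show ?case
    proof (cases "r \<le> 2")
      case True
      then show ?thesis using small Suc.prems by simp
    next
      case False
      have split: "{z :: int ^ 'd. lnorm z \<le> r}
          = {z. lnorm z \<le> r/2} \<union> {z. r/2 < lnorm z \<and> lnorm z \<le> r}"
        using False by auto
      have "?W r = ?W (r/2) + (\<Sum>z \<in> {z :: int ^ 'd. r/2 < lnorm z \<and> lnorm z \<le> r}. lweight \<alpha> z)"
        unfolding split by (rule sum.union_disjoint) (use finite_lnorm_le[of "r/2"] in auto)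
      also have "\<dots> \<le> C * (r/2) powr (CARD('d) - \<alpha>) + 3 ^ CARD('d) * 2 powr \<alpha> * r powr (CARD('d) - \<alpha>)"
        using Suc.prems False by (intro add_mono Suc.IH sum_lweight_shell_le assms(1)) auto
      also have "C * (r/2) powr (CARD('d) - \<alpha>) = C * 2 powr (\<alpha> - CARD('d)) * r powr (CARD('d) - \<alpha>)"
        using Suc.prems by (simp add: powr_divide powr_minus_divide powr_diff divide_simps)
      also have "C * 2 powr (\<alpha> - CARD('d)) * r powr (CARD('d) - \<alpha>)
            + 3 ^ CARD('d) * 2 powr \<alpha> * r powr (CARD('d) - \<alpha>)
          = (C * 2 powr (\<alpha> - CARD('d)) + 3 ^ CARD('d) * 2 powr \<alpha>) * r powr (CARD('d) - \<alpha>)"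
        by (simp add: algebra_simps)
      also have "\<dots> \<le> C * r powr (CARD('d) - \<alpha>)"
        using step by (rule mult_right_mono) simp
      finally show ?thesis .
    qed
  }
qed

lemma sum_lweight_ball_le:
  fixes \<alpha> :: real
  assumes "0 \<le> \<alpha>" "\<alpha> < CARD('d::finite)"
  obtains C where "0 < C"
    "\<And>r. 1 \<le> r \<Longrightarrow>
      (\<Sum>z \<in> {z :: int ^ 'd. lnorm z \<le> r}. lweight \<alpha> z) \<le> C * r powr (CARD('d) - \<alpha>)"
proof -
  define q where "q = 2 powr (\<alpha> - CARD('d))"
  define C where "C = 5 ^ CARD('d) * 2 powr \<alpha> / (1 - q)"
  have q: "0 < q" "q < 1"
    using assms by (simp_all add: q_def powr_less_one)
  have "5 ^ CARD('d) * 1 \<le> 5 ^ CARD('d) * (2 powr \<alpha> / (1 - q))"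
    using q ge_one_powr_ge_zero[of 2 \<alpha>] assms by (intro mult_left_mono) (auto simp: field_simps)
  then have base: "5 ^ CARD('d) \<le> C"
    by (simp add: C_def)
  \<comment> \<open>C is the fixed point of C = q C + 5^d 2^\<alpha>, so the dyadic step preserves the bound.\<close>
  have "C - C * q = C * (1 - q)"
    by (simp add: algebra_simps)
  also have "\<dots> = 5 ^ CARD('d) * 2 powr \<alpha>"
    using q by (simp add: C_def)
  moreover have "3 ^ CARD('d) * 2 powr \<alpha> \<le> 5 ^ CARD('d) * 2 powr (\<alpha>::real)"
    by (intro mult_right_mono power_mono) auto
  ultimately have step: "C * q + 3 ^ CARD('d) * 2 powr \<alpha> \<le> C"
    by linarith
  show ?thesis
  proof (rule that)
    show "0 < C"
      using base by (rule order.strict_trans2[rotated]) simp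
    fix r :: real assume "1 \<le> r"
    moreover obtain n where "r \<le> 2 ^ n"
      using real_arch_pow[of 2 r] by (auto dest: less_imp_le)
    ultimately show "(\<Sum>z \<in> {z :: int ^ 'd. lnorm z \<le> r}. lweight \<alpha> z) \<le> C * r powr (CARD('d) - \<alpha>)"
      using sum_lweight_ball_le_dyadic[OF assms base step[unfolded q_def]] by blast
  qed
qed

section \<open>Tails, limits and the choice of scales\<close>

lemma eventually_at_infty_lat:
  "eventually P at_infty_lat \<longleftrightarrow> (\<exists>R. \<forall>x. R \<le> lnorm x \<longrightarrow> P x)"
  unfolding at_infty_lat_def eventually_filtercomap eventually_at_top_linorder by auto

lemma filterlim_lnorm_le_finite_subsets:
  "filterlim (\<lambda>t. {y :: int ^ 'd::finite. lnorm y \<le> t}) (finite_subsets_at_top UNIV) at_top"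
  unfolding filterlim_finite_subsets_at_top
proof (intro allI impI)
  fix X :: "(int ^ 'd) set" assume "finite X \<and> X \<subseteq> UNIV"
  then have "X \<subseteq> {y. lnorm y \<le> t}" if "(\<Sum>x\<in>X. lnorm x) \<le> t" for t
    using that member_le_sum[of _ X lnorm] by fastforce
  then show "eventually (\<lambda>t. finite {y. lnorm y \<le> t} \<and> X \<subseteq> {y. lnorm y \<le> t}
      \<and> {y. lnorm y \<le> t} \<subseteq> UNIV) at_top"
    by (auto intro: eventually_mono[OF eventually_ge_at_top[of "\<Sum>x\<in>X. lnorm x"]])
qed

lemma tendsto_sum_lnorm_le:
  fixes \<phi> :: "int ^ 'd::finite \<Rightarrow> 'a::{comm_monoid_add, topological_space}"
  assumes "(\<phi> has_sum S) UNIV"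
  shows "((\<lambda>t. \<Sum>y | lnorm y \<le> t. \<phi> y) \<longlongrightarrow> S) at_top"
  using filterlim_compose[OF assms[unfolded has_sum_def] filterlim_lnorm_le_finite_subsets] .

lemma has_sum_lnorm_greater:
  fixes \<phi> :: "int ^ 'd::finite \<Rightarrow> 'a::topological_ab_group_add"
  assumes "(\<phi> has_sum S) UNIV"
  shows "((\<lambda>y. if t < lnorm y then \<phi> y else 0) has_sum (S - (\<Sum>y | lnorm y \<le> t. \<phi> y))) UNIV"
proof -
  have "(\<phi> has_sum (S - (\<Sum>y | lnorm y \<le> t. \<phi> y))) (UNIV - {y. lnorm y \<le> t})"
    by (rule has_sum_Diff[OF assms has_sum_finiteI]) auto
  then show ?thesis
    by (subst has_sum_cong_neutral[where T = "UNIV - {y. lnorm y \<le> t}" and g = \<phi>]) auto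
qed

lemma asymp_equiv_imp_eventually_rel_error:
  fixes f g :: "'a \<Rightarrow> real"
  assumes "f \<sim>[F] g" "0 < e"
  shows "eventually (\<lambda>x. \<bar>f x - g x\<bar> \<le> e * \<bar>g x\<bar>) F"
  using landau_o.smallD[OF assms(1)[unfolded asymp_equiv_altdef] assms(2)] by simp

lemma bigo_imp_le_lweight:
  fixes f :: "int ^ 'd::finite \<Rightarrow> real"
  assumes "f \<in> O[at_infty_lat](\<lambda>x. lnorm x powr (-\<alpha>))"
  obtains B where "\<And>z. \<bar>f z\<bar> \<le> B * lweight \<alpha> z"
proof -
  obtain c where "0 < c" "eventually (\<lambda>z. \<bar>f z\<bar> \<le> c * lnorm z powr (-\<alpha>)) at_infty_lat"
    using landau_o.bigE[OF assms] by auto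
  then obtain R where c: "\<And>z. R \<le> lnorm z \<Longrightarrow> \<bar>f z\<bar> \<le> c * lnorm z powr (-\<alpha>)"
    unfolding eventually_at_infty_lat by auto
  define R' where "R' = max 1 R"
  define M where "M = (\<Sum>z | lnorm z \<le> R'. \<bar>f z\<bar> / lweight \<alpha> z)"
  have "\<bar>f z\<bar> \<le> (c + M) * lweight \<alpha> z" for z
  proof (cases "R' \<le> lnorm z")
    case True
    then have "\<bar>f z\<bar> \<le> c * lweight \<alpha> z"
      using c[of z] lweight_eq[of z \<alpha>] by (simp add: R'_def)
    moreover have "0 \<le> M"
      unfolding M_def by (intro sum_nonneg divide_nonneg_pos lweight_pos) simp
    ultimately show ?thesis
      using lweight_pos[of \<alpha> z] by (simp add: distrib_right add_increasing2)
  next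
    case False
    then have "\<bar>f z\<bar> / lweight \<alpha> z \<le> M"
      unfolding M_def
      by (intro member_le_sum divide_nonneg_pos lweight_pos) auto
    with \<open>0 < c\<close> show ?thesis
      using lweight_pos[of \<alpha> z] by (simp add: divide_le_eq distrib_right add_increasing)
  qed
  then show ?thesis by (rule that)
qed

lemma eventually_powr_near_1:
  fixes a e :: real
  assumes "0 < e"
  shows "eventually (\<lambda>\<delta>. \<forall>s. \<bar>s - 1\<bar> \<le> \<delta> \<longrightarrow> \<bar>s powr a - 1\<bar> \<le> e) (at_right 0)"
proof -
  have "isCont (\<lambda>s. s powr a) 1"
    by (intro continuous_intros) auto
  then obtain d where "0 < d" and d: "\<And>s. \<bar>s - 1\<bar> < d \<Longrightarrow> \<bar>s powr a - 1\<bar> < e"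
    using assms unfolding continuous_at_eps_delta dist_real_def by force
  then show ?thesis
    using eventually_at_right_real[OF \<open>0 < d\<close>]
    by (elim eventually_mono) (auto intro: less_imp_le d)
qed

lemma eventually_mult_powr_le:
  fixes c e p :: real
  assumes "0 < p" "0 < e"
  shows "eventually (\<lambda>\<delta>. c * \<delta> powr p \<le> e) (at_right 0)"
proof -
  have "((\<lambda>\<delta>. c * \<delta> powr p) \<longlongrightarrow> c * 0) (at_right 0)"
    by (intro tendsto_intros tendsto_zero_powrI[OF _ tendsto_const _ assms(1)])
       (auto intro: tendsto_ident_at eventually_at_right_less[THEN eventually_mono])
  from order_tendstoD(2)[OF this, of e] assms(2) show ?thesis
    by (auto elim: eventually_mono)
qed

lemma small_delta_exists:
  fixes a c e p :: real
  assumes "0 < e" "0 < p"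
  obtains \<delta> where "0 < \<delta>" "\<delta> \<le> 1/2" "\<forall>s. \<bar>s - 1\<bar> \<le> \<delta> \<longrightarrow> \<bar>s powr a - 1\<bar> \<le> e"
    "c * \<delta> powr p \<le> e"
proof -
  have "eventually (\<lambda>\<delta>. \<delta> \<in> {0<..<1/2} \<and> (\<forall>s. \<bar>s - 1\<bar> \<le> \<delta> \<longrightarrow> \<bar>s powr a - 1\<bar> \<le> e)
      \<and> c * \<delta> powr p \<le> e) (at_right 0)"
    using assms
    by (intro eventually_conj eventually_at_right_real eventually_powr_near_1 eventually_mult_powr_le)
       auto
  then show ?thesis
    using that by (auto dest: eventually_happens)
qed

section \<open>The convolution estimate\<close>

lemma has_sum_reflect:
  fixes \<psi> :: "'a::ab_group_add \<Rightarrow> 'b::{comm_monoid_add, topological_space}"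
  shows "((\<lambda>y. \<psi> (x - y)) has_sum S) UNIV \<longleftrightarrow> (\<psi> has_sum S) UNIV"
  by (rule has_sum_reindex_bij_betw) (rule bij_betwI[where g = "\<lambda>y. x - y"], auto)

lemma has_sum_lnorm_le:
  "((\<lambda>z :: int ^ 'd::finite. if lnorm z \<le> r then \<phi> z else 0) has_sum (\<Sum>z | lnorm z \<le> r. \<phi> z)) UNIV"
  by (subst has_sum_cong_neutral[where T = "{z. lnorm z \<le> r}" and g = \<phi>]) auto

lemma has_sum_scaled_lconv_diff:
  fixes f g :: "int ^ 'd::finite \<Rightarrow> real"
  assumes f: "\<And>z. \<bar>f z\<bar> \<le> M" and g: "(\<lambda>y. \<bar>g y\<bar>) summable_on UNIV"
  shows "((\<lambda>y. (c * f (x - y) - a) * g y) has_sum (c * lconv f g x - a * (\<Sum>\<^sub>\<infinity>y. g y))) UNIV"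
proof -
  have "(\<lambda>y. f (x - y) * g y) summable_on UNIV"
  proof (rule summable_on_iff_abs_summable_on_real[THEN iffD2, OF Infinite_Sum.abs_summable_on_comparison_test])
    show "(\<lambda>y. norm (M * \<bar>g y\<bar>)) summable_on UNIV"
      using summable_on_cmult_right[OF g, of "\<bar>M\<bar>"] by (simp add: abs_mult)
    show "norm (f (x - y) * g y) \<le> norm (M * \<bar>g y\<bar>)" for y
      unfolding real_norm_def abs_mult abs_abs
      using f[of "x - y"] by (intro mult_right_mono) auto
  qed
  then have "((\<lambda>y. c * (f (x - y) * g y)) has_sum c * lconv f g x) UNIV"
    unfolding lconv_def
    by (intro has_sum_cmult_right[OF has_sum_infsum])
  moreover have "((\<lambda>y. (- a) * g y) has_sum (- a) * (\<Sum>\<^sub>\<infinity>y. g y)) UNIV"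
    using g summable_on_iff_abs_summable_on_real[of g UNIV]
    by (intro has_sum_cmult_right[OF has_sum_infsum]) simp
  ultimately have "((\<lambda>y. c * (f (x - y) * g y) + (- a) * g y)
      has_sum (c * lconv f g x + (- a) * (\<Sum>\<^sub>\<infinity>y. g y))) UNIV"
    by (rule has_sum_add)
  moreover have "(\<lambda>y. c * (f (x - y) * g y) + (- a) * g y) = (\<lambda>y. (c * f (x - y) - a) * g y)"
    by (simp add: fun_eq_iff algebra_simps)
  ultimately show ?thesis
    by simp
qed

lemma abs_scaled_rel_error_le:
  fixes A c e p \<phi> :: real
  assumes rel: "\<bar>\<phi> - A * p\<bar> \<le> e * (A * p)" and scale: "\<bar>c * p - 1\<bar> \<le> e"
    and "e \<le> 1" "0 < A" "0 \<le> c"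
  shows "\<bar>c * \<phi> - A\<bar> \<le> 3 * A * e"
proof -
  have "c * \<phi> - A = A * (c * p - 1) + c * (\<phi> - A * p)"
    by (simp add: algebra_simps)
  then have "\<bar>c * \<phi> - A\<bar> \<le> A * \<bar>c * p - 1\<bar> + c * \<bar>\<phi> - A * p\<bar>"
    using assms(4,5) by (simp add: abs_mult abs_triangle_ineq order_trans[OF abs_triangle_ineq])
  also have "\<dots> \<le> A * e + c * (e * (A * p))"
    using assms by (intro add_mono mult_left_mono) auto
  also have "\<dots> = A * e + A * e * (c * p)"
    by (simp add: algebra_simps)
  also have "\<dots> \<le> A * e + A * e * 2"
    using assms scale abs_le_D1[OF scale] by (intro add_left_mono mult_left_mono) auto
  finally show ?thesis
    by simp
qed

locale lattice_conv =
  fixes f g :: "int ^ 'd::finite \<Rightarrow> real" and \<alpha> A K B :: real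
  assumes alpha_nonneg: "0 \<le> \<alpha>" and alpha_less_dim: "\<alpha> < CARD('d)"
    and A_pos: "0 < A"
    and f_equiv: "f \<sim>[at_infty_lat] (\<lambda>x. A * lnorm x powr (-\<alpha>))"
    and f_le_lweight: "\<And>z. \<bar>f z\<bar> \<le> B * lweight \<alpha> z"
    and abs_g_has_sum: "((\<lambda>x. \<bar>g x\<bar>) has_sum K) UNIV"
    and g_decay: "\<And>x. x \<noteq> 0 \<Longrightarrow> \<bar>g x\<bar> \<le> K * lnorm x powr (- CARD('d))"
begin

lemma B_nonneg: "0 \<le> B"
proof -
  have "0 \<le> \<bar>f 0\<bar>"
    by simp
  also have "\<dots> \<le> B * lweight \<alpha> (0 :: int ^ 'd)"
    by (rule f_le_lweight)
  finally show ?thesis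
    using lweight_pos[of \<alpha> "0 :: int ^ 'd"] by (simp add: zero_le_mult_iff)
qed

lemma K_nonneg: "0 \<le> K"
  using abs_g_has_sum by (rule has_sum_nonneg) simp

lemma abs_f_le_B: "\<bar>f z\<bar> \<le> B"
  using f_le_lweight[of z] mult_left_mono[OF lweight_le_1[of \<alpha> z, OF alpha_nonneg] B_nonneg]
  by linarith

lemma far_term_le:
  assumes "0 < \<delta>" "0 < lnorm x" "\<delta> * lnorm x \<le> lnorm z"
  shows "lnorm x powr \<alpha> * \<bar>f z\<bar> \<le> B * \<delta> powr (-\<alpha>)"
proof -
  have "\<bar>f z\<bar> \<le> B * lweight \<alpha> z"
    by (rule f_le_lweight)
  also have "\<dots> \<le> B * (\<delta> * lnorm x) powr (-\<alpha>)"
    using assms by (intro mult_left_mono lweight_le_powr alpha_nonneg B_nonneg) auto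
  finally have "\<bar>f z\<bar> \<le> B * (\<delta> * lnorm x) powr (-\<alpha>)" .
  then have "lnorm x powr \<alpha> * \<bar>f z\<bar> \<le> lnorm x powr \<alpha> * (B * (\<delta> * lnorm x) powr (-\<alpha>))"
    by (rule mult_left_mono) simp
  also have "\<dots> = B * \<delta> powr (-\<alpha>)"
    using assms by (simp add: powr_mult powr_minus field_simps)
  finally show ?thesis .
qed

lemma abs_g_le_half_lnorm:
  assumes "0 < lnorm x" "lnorm x / 2 \<le> lnorm y"
  shows "\<bar>g y\<bar> \<le> K * 2 powr CARD('d) * lnorm x powr (- CARD('d))"
proof -
  have "y \<noteq> 0"
    using assms by auto
  then have "\<bar>g y\<bar> \<le> K * lnorm y powr (- CARD('d))"
    by (rule g_decay)
  also have "\<dots> \<le> K * (lnorm x / 2) powr (- CARD('d))"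
    using assms K_nonneg by (intro mult_left_mono powr_mono2') auto
  also have "\<dots> = K * 2 powr CARD('d) * lnorm x powr (- CARD('d))"
    using assms by (simp add: powr_divide powr_minus divide_simps)
  finally show ?thesis .
qed

context
  fixes e \<delta> R1 :: real
  assumes e_le_1: "e \<le> 1" and \<delta>_pos: "0 < \<delta>" and \<delta>_le: "\<delta> \<le> 1/2"
    and near: "\<forall>s. \<bar>s - 1\<bar> \<le> \<delta> \<longrightarrow> \<bar>s powr (-\<alpha>) - 1\<bar> \<le> e"
    and rel: "\<And>z. R1 \<le> lnorm z \<Longrightarrow> \<bar>f z - A * lnorm z powr (-\<alpha>)\<bar> \<le> e * (A * lnorm z powr (-\<alpha>))"
begin

lemma close_term_le:
  assumes x: "R1 \<le> lnorm x / 2" "0 < lnorm x" and y: "lnorm y \<le> \<delta> * lnorm x"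
  shows "\<bar>lnorm x powr \<alpha> * f (x - y) - A\<bar> \<le> 3 * A * e"
proof -
  define R t where "R = lnorm x" and "t = lnorm (x - y)"
  have R: "0 < R"
    using x by (simp add: R_def)
  have dist: "\<bar>t - R\<bar> \<le> \<delta> * R"
    using abs_lnorm_diff_le[of x y] y by (simp add: R_def t_def)
  have "\<delta> * R \<le> R / 2"
    using R \<delta>_le by (simp add: mult_right_mono)
  then have "R / 2 \<le> t"
    using abs_le_D2[OF dist] by linarith
  have "\<bar>t / R - 1\<bar> = \<bar>t - R\<bar> / R"
    using R by (simp add: field_simps abs_divide)
  also have "\<dots> \<le> \<delta>"
    using dist R by (simp add: divide_le_eq)
  finally have "\<bar>t / R - 1\<bar> \<le> \<delta>" .
  moreover have "R powr \<alpha> * t powr (-\<alpha>) = (t / R) powr (-\<alpha>)"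
    using R \<open>R / 2 \<le> t\<close> by (simp add: powr_divide powr_minus_divide)
  ultimately have "\<bar>R powr \<alpha> * t powr (-\<alpha>) - 1\<bar> \<le> e"
    using near by simp
  moreover have "R1 \<le> t"
    using x(1) \<open>R / 2 \<le> t\<close> by (simp add: R_def)
  ultimately show ?thesis
    unfolding R_def t_def using e_le_1 A_pos by (intro abs_scaled_rel_error_le[OF rel]) auto
qed

lemma conv_term_le:
  assumes x: "R1 \<le> lnorm x / 2" "0 < lnorm x"
  shows "\<bar>(lnorm x powr \<alpha> * f (x - y) - A) * g y\<bar>
    \<le> 3 * A * e * \<bar>g y\<bar>
      + (B * \<delta> powr (-\<alpha>) + A) * (if \<delta> * lnorm x < lnorm y then \<bar>g y\<bar> else 0)
      + K * 2 powr CARD('d) * B * lnorm x powr (\<alpha> - CARD('d))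
          * (if lnorm (x - y) \<le> \<delta> * lnorm x then lweight \<alpha> (x - y) else 0)"
    (is "_ \<le> ?near + ?tail + ?mid")
proof -
  define R where "R = lnorm x"
  have "0 \<le> e"
    using near[rule_format, of 1] \<delta>_pos by simp
  then have nonneg: "0 \<le> ?near" "0 \<le> ?tail" "0 \<le> ?mid"
    using A_pos B_nonneg K_nonneg lweight_pos[of \<alpha> "x - y"] by auto
  have split: "\<bar>(R powr \<alpha> * f (x - y) - A) * g y\<bar> \<le> R powr \<alpha> * \<bar>f (x - y)\<bar> * \<bar>g y\<bar> + A * \<bar>g y\<bar>"
    using A_pos by (simp add: abs_mult distrib_right[symmetric] mult_right_mono abs_triangle_ineq4
        order_trans[OF abs_triangle_ineq4])
  consider (close) "lnorm y \<le> \<delta> * R"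
    | (far) "\<delta> * R < lnorm y" "\<delta> * R < lnorm (x - y)"
    | (mid) "\<delta> * R < lnorm y" "lnorm (x - y) \<le> \<delta> * R"
    by linarith
  then show ?thesis
  proof cases
    case close
    then have "\<bar>R powr \<alpha> * f (x - y) - A\<bar> * \<bar>g y\<bar> \<le> 3 * A * e * \<bar>g y\<bar>"
      using close_term_le[OF x] by (intro mult_right_mono) (auto simp: R_def)
    then show ?thesis
      using nonneg by (simp add: R_def abs_mult)
  next
    case far
    then have "R powr \<alpha> * \<bar>f (x - y)\<bar> * \<bar>g y\<bar> \<le> B * \<delta> powr (-\<alpha>) * \<bar>g y\<bar>"
      using far_term_le[OF \<delta>_pos x(2), of "x - y"] by (intro mult_right_mono) (auto simp: R_def)
    moreover have "?tail = B * \<delta> powr (-\<alpha>) * \<bar>g y\<bar> + A * \<bar>g y\<bar>"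
      using far by (simp add: R_def algebra_simps)
    ultimately show ?thesis
      using split nonneg unfolding R_def by linarith
  next
    case mid
    have "R / 2 \<le> lnorm y"
      using abs_lnorm_diff_le[of x y] mid \<delta>_le x(2) mult_right_mono[of \<delta> "1/2" R]
      by (simp add: R_def abs_le_iff)
    then have g: "\<bar>g y\<bar> \<le> K * 2 powr CARD('d) * R powr (- CARD('d))"
      using abs_g_le_half_lnorm x(2) by (simp add: R_def)
    have "R powr \<alpha> * \<bar>f (x - y)\<bar> * \<bar>g y\<bar>
        \<le> R powr \<alpha> * (B * lweight \<alpha> (x - y)) * (K * 2 powr CARD('d) * R powr (- CARD('d)))"
      using f_le_lweight g B_nonneg lweight_pos[of \<alpha> "x - y"]
      by (intro mult_mono mult_left_mono) auto
    also have "\<dots> = ?mid"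
      using mid by (simp add: R_def powr_diff powr_minus_divide)
    moreover have "A * \<bar>g y\<bar> \<le> ?tail"
      using mid B_nonneg by (simp add: R_def mult_right_mono)
    ultimately show ?thesis
      using split nonneg unfolding R_def by linarith
  qed
qed

lemma conv_error_le:
  assumes x: "R1 \<le> lnorm x / 2" "0 < lnorm x"
  shows "\<bar>lnorm x powr \<alpha> * lconv f g x - A * (\<Sum>\<^sub>\<infinity>y. g y)\<bar>
    \<le> 3 * A * e * K
      + (B * \<delta> powr (-\<alpha>) + A) * (K - (\<Sum>y | lnorm y \<le> \<delta> * lnorm x. \<bar>g y\<bar>))
      + K * 2 powr CARD('d) * B * lnorm x powr (\<alpha> - CARD('d))
          * (\<Sum>z :: int ^ 'd | lnorm z \<le> \<delta> * lnorm x. lweight \<alpha> z)"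
proof -
  have h: "((\<lambda>y. (lnorm x powr \<alpha> * f (x - y) - A) * g y)
      has_sum (lnorm x powr \<alpha> * lconv f g x - A * (\<Sum>\<^sub>\<infinity>y. g y))) UNIV"
    using abs_f_le_B abs_g_has_sum by (intro has_sum_scaled_lconv_diff) (auto simp: summable_on_def)
  let ?r = "\<delta> * lnorm x"
  have u1: "((\<lambda>y. 3 * A * e * \<bar>g y\<bar>) has_sum 3 * A * e * K) UNIV"
    by (rule has_sum_cmult_right[OF abs_g_has_sum])
  have u2: "((\<lambda>y. (B * \<delta> powr (-\<alpha>) + A) * (if ?r < lnorm y then \<bar>g y\<bar> else 0))
      has_sum (B * \<delta> powr (-\<alpha>) + A) * (K - (\<Sum>y | lnorm y \<le> ?r. \<bar>g y\<bar>))) UNIV"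
    by (rule has_sum_cmult_right[OF has_sum_lnorm_greater[OF abs_g_has_sum]])
  have u3: "((\<lambda>y. K * 2 powr CARD('d) * B * lnorm x powr (\<alpha> - CARD('d))
        * (if lnorm (x - y) \<le> ?r then lweight \<alpha> (x - y) else 0))
      has_sum K * 2 powr CARD('d) * B * lnorm x powr (\<alpha> - CARD('d))
        * (\<Sum>z :: int ^ 'd | lnorm z \<le> ?r. lweight \<alpha> z)) UNIV"
    by (rule has_sum_cmult_right, subst has_sum_reflect) (rule has_sum_lnorm_le)
  have pointwise: "\<bar>(lnorm x powr \<alpha> * f (x - y) - A) * g y\<bar> \<le> 3 * A * e * \<bar>g y\<bar>
      + (B * \<delta> powr (-\<alpha>) + A) * (if ?r < lnorm y then \<bar>g y\<bar> else 0)
      + K * 2 powr CARD('d) * B * lnorm x powr (\<alpha> - CARD('d))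
        * (if lnorm (x - y) \<le> ?r then lweight \<alpha> (x - y) else 0)" for y
    by (rule conv_term_le[OF x])
  show ?thesis
    using norm_infsum_le[OF h has_sum_add[OF has_sum_add[OF u1 u2] u3]] pointwise by simp
qed

end

lemma eventually_conv_error_le:
  assumes "0 < e" "e \<le> 1"
  shows "eventually (\<lambda>x. \<bar>lnorm x powr \<alpha> * lconv f g x - A * (\<Sum>\<^sub>\<infinity>y. g y)\<bar> \<le> (3 * A * K + 2) * e)
    at_infty_lat"
proof -
  define d where "d = real CARD('d)"
  obtain C where "0 < C"
    and C: "\<And>r. 1 \<le> r \<Longrightarrow> (\<Sum>z :: int ^ 'd | lnorm z \<le> r. lweight \<alpha> z) \<le> C * r powr (d - \<alpha>)"
    using sum_lweight_ball_le[OF alpha_nonneg alpha_less_dim] unfolding d_def by blast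
  obtain \<delta> where "0 < \<delta>" "\<delta> \<le> 1/2"
    and near: "\<forall>s. \<bar>s - 1\<bar> \<le> \<delta> \<longrightarrow> \<bar>s powr (-\<alpha>) - 1\<bar> \<le> e"
    and \<delta>_small: "K * 2 powr d * B * C * \<delta> powr (d - \<alpha>) \<le> e"
    using small_delta_exists[OF assms(1), of "d - \<alpha>"] alpha_less_dim by (auto simp: d_def)
  obtain R1 where
    rel: "\<And>z. R1 \<le> lnorm z \<Longrightarrow> \<bar>f z - A * lnorm z powr (-\<alpha>)\<bar> \<le> e * (A * lnorm z powr (-\<alpha>))"
    using asymp_equiv_imp_eventually_rel_error[OF f_equiv assms(1)] A_pos
    unfolding eventually_at_infty_lat by auto
  define c where "c = B * \<delta> powr (-\<alpha>) + A"
  have "((\<lambda>t. c * (K - (\<Sum>y | lnorm y \<le> t. \<bar>g y\<bar>))) \<longlongrightarrow> c * (K - K)) at_top"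
    by (intro tendsto_intros tendsto_sum_lnorm_le abs_g_has_sum)
  then have "eventually (\<lambda>t. c * (K - (\<Sum>y | lnorm y \<le> t. \<bar>g y\<bar>)) < e) at_top"
    using assms(1) by (intro order_tendstoD(2)) auto
  then obtain T where tail: "\<And>t. T \<le> t \<Longrightarrow> c * (K - (\<Sum>y | lnorm y \<le> t. \<bar>g y\<bar>)) < e"
    by (auto simp: eventually_at_top_linorder)
  have "\<bar>lnorm x powr \<alpha> * lconv f g x - A * (\<Sum>\<^sub>\<infinity>y. g y)\<bar> \<le> (3 * A * K + 2) * e"
    if x: "max (2 * R1) (max (1 / \<delta>) (T / \<delta>)) \<le> lnorm x" for x
  proof -
    define R where "R = lnorm x"
    have "1 / \<delta> \<le> R" "2 * R1 \<le> R" "T / \<delta> \<le> R"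
      using x by (auto simp: R_def)
    moreover have "0 < 1 / \<delta>"
      using \<open>0 < \<delta>\<close> by simp
    ultimately have R: "0 < R" "R1 \<le> R / 2" "1 \<le> \<delta> * R" "T \<le> \<delta> * R"
      using \<open>0 < \<delta>\<close> by (linarith, auto simp: field_simps)
    have "\<bar>lnorm x powr \<alpha> * lconv f g x - A * (\<Sum>\<^sub>\<infinity>y. g y)\<bar>
        \<le> 3 * A * e * K + c * (K - (\<Sum>y | lnorm y \<le> \<delta> * R. \<bar>g y\<bar>))
          + K * 2 powr d * B * R powr (\<alpha> - d) * (\<Sum>z :: int ^ 'd | lnorm z \<le> \<delta> * R. lweight \<alpha> z)"
      using conv_error_le[OF assms(2) \<open>0 < \<delta>\<close> \<open>\<delta> \<le> 1/2\<close> near rel, where x = x] R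
      by (simp add: R_def c_def d_def)
    also have "\<dots> \<le> 3 * A * e * K + e + K * 2 powr d * B * R powr (\<alpha> - d) * (C * (\<delta> * R) powr (d - \<alpha>))"
      using less_imp_le[OF tail[OF R(4)]] C[OF R(3)] K_nonneg B_nonneg
      by (intro add_mono mult_left_mono order.refl) auto
    also have "K * 2 powr d * B * R powr (\<alpha> - d) * (C * (\<delta> * R) powr (d - \<alpha>))
        = K * 2 powr d * B * C * \<delta> powr (d - \<alpha>)"
      using R(1) \<open>0 < \<delta>\<close> by (simp add: powr_mult powr_diff field_simps)
    finally show ?thesis
      using \<delta>_small by (simp add: algebra_simps)
  qed
  then show ?thesis
    unfolding eventually_at_infty_lat by blast
qed

lemma tendsto_scaled_lconv:
  "((\<lambda>x. lnorm x powr \<alpha> * lconv f g x) \<longlongrightarrow> A * (\<Sum>\<^sub>\<infinity>y. g y)) at_infty_lat"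
proof (rule tendstoI)
  fix \<epsilon> :: real assume "0 < \<epsilon>"
  define c where "c = 3 * A * K + 2"
  have "0 < c"
    using A_pos K_nonneg by (simp add: c_def add_nonneg_pos)
  define e where "e = min 1 (\<epsilon> / (2 * c))"
  have "0 < e" "e \<le> 1" "c * e < \<epsilon>"
    using \<open>0 < \<epsilon>\<close> \<open>0 < c\<close> by (auto simp: e_def min_def field_simps)
  then show "eventually (\<lambda>x. dist (lnorm x powr \<alpha> * lconv f g x) (A * (\<Sum>\<^sub>\<infinity>y. g y)) < \<epsilon>) at_infty_lat"
    using eventually_conv_error_le[of e]
    by (auto simp: c_def dist_real_def elim: eventually_mono)
qed

end

theorem lemmaB1:
  fixes f g :: "int ^ 'd::finite \<Rightarrow> real" and \<alpha> A K :: real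
  assumes "0 < \<alpha>" and "\<alpha> < real CARD('d)"
    and "A > 0" and "K > 0"
    and "f \<sim>[at_infty_lat] (\<lambda>x. A * lnorm x powr (-\<alpha>))"
    and "((\<lambda>x. \<bar>g x\<bar>) has_sum K) UNIV"
    and "\<And>x. x \<noteq> 0 \<Longrightarrow> \<bar>g x\<bar> \<le> K * lnorm x powr (- real CARD('d))"
  shows "((\<lambda>x. lnorm x powr \<alpha> * lconv f g x) \<longlongrightarrow> A * (\<Sum>\<^sub>\<infinity>y. g y)) at_infty_lat"
proof -
  have "f \<in> O[at_infty_lat](\<lambda>x. lnorm x powr (-\<alpha>))"
    using asymp_equiv_imp_bigo[OF assms(5)] \<open>A > 0\<close> by simp
  then obtain B where "\<And>z. \<bar>f z\<bar> \<le> B * lweight \<alpha> z"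
    by (rule bigo_imp_le_lweight) blast
  then interpret lattice_conv f g \<alpha> A K B
    using assms by unfold_locales auto
  show ?thesis
    by (rule tendsto_scaled_lconv)
qed

end
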